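(* Let $R\ge1$, $\mathbf{x}$ a vector of pairwise distinct reals and $\mathbf{c}=(c_1,\dots,c_R)\in\mathbb{R}^R$ with $c_k\ne0$ for all $k$. Then the $R$ eigenvalues of $B(\mathbf{x},\mathbf{c})$ are pairwise distinct (each eigenvalue is simple).
   Context: $B(\mathbf{x},\mathbf{c})$ is the $R\times R$ matrix with entries $b_{m,m}=0$ and $b_{m,n}=\frac{c_mc_n}{x_m-x_n}$ for $m\ne n$. *)

theory Defs
  imports Jordan_Normal_Form.Char_Poly
begin

text \<open>The R x R matrix B(x,c), indices 0..R-1 (paper uses 1..R):
  diagonal entries 0, off-diagonal entries c_m c_n / (x_m - x_n).\<close>
definition Bmat :: "nat \<Rightarrow> (nat \<Rightarrow> real) \<Rightarrow> (nat \<Rightarrow> real) \<Rightarrow> real mat" where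
  "Bmat R x c = mat R R (\<lambda>(m, n). if m = n then 0 else c m * c n / (x m - x n))"

end

theory Submission
  imports
    Defs
    Jordan_Normal_Form.Jordan_Normal_Form_Uniqueness
    Jordan_Normal_Form.Jordan_Normal_Form_Existence
begin

text \<open>Since \<open>B\<close> is real and skew-symmetric, it is skew-Hermitian as a complex matrix. Hence every
  eigenvalue \<open>a\<close> is imaginary, \<open>B - a I\<close> is again skew-Hermitian, and a skew-Hermitian matrix has
  the same kernel as all its powers; so the algebraic multiplicity of \<open>a\<close> equals the dimension of
  its eigenspace. With \<open>D = diag x\<close> the commutator \<open>D B - B D\<close> is \<open>c c\<^sup>T - diag (c\<^sub>k\<^sup>2)\<close>.
  Evaluating the commutator of \<open>D\<close> and \<open>B - a I\<close> on an eigenvector \<open>v\<close> with \<open>c\<^sup>T v = 0\<close>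
  gives \<open>\<Sum>k. c\<^sub>k\<^sup>2 \<bar>v\<^sub>k\<bar>\<^sup>2 = 0\<close>, so \<open>v = 0\<close>: the eigenspace meets the hyperplane
  \<open>c\<^sup>\<bottom>\<close> trivially and is at most one-dimensional.\<close>

hide_const (open) Coset.order

definition skew_hermitian_mat :: "nat \<Rightarrow> complex mat \<Rightarrow> bool" where
  "skew_hermitian_mat n A \<longleftrightarrow>
    A \<in> carrier_mat n n \<and> (\<forall>i<n. \<forall>j<n. cnj (A $$ (j, i)) = - A $$ (i, j))"

lemma skew_hermitian_cscalar_prod:
  assumes A: "skew_hermitian_mat n A" and u: "u \<in> carrier_vec n" and v: "v \<in> carrier_vec n"
  shows "(A *\<^sub>v u) \<bullet>c v = - (u \<bullet>c (A *\<^sub>v v))"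
proof -
  have "(A *\<^sub>v u) \<bullet>c v = (\<Sum>i<n. \<Sum>j<n. A $$ (i, j) * u $ j * cnj (v $ i))"
    using A u v unfolding skew_hermitian_mat_def
    by (auto simp: scalar_prod_def sum_distrib_right atLeast0LessThan intro!: sum.cong)
  also have "\<dots> = (\<Sum>j<n. \<Sum>i<n. A $$ (i, j) * u $ j * cnj (v $ i))" by (rule sum.swap)
  also have "\<dots> = - (u \<bullet>c (A *\<^sub>v v))"
    using A u v unfolding skew_hermitian_mat_def
    by (auto simp: scalar_prod_def sum_distrib_left atLeast0LessThan sum_negf[symmetric]
        intro!: sum.cong)
  finally show ?thesis .
qed

lemma skew_hermitian_char_matrix:
  assumes "skew_hermitian_mat n A" and "cnj a = - a"
  shows "skew_hermitian_mat n (char_matrix A a)"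
  using assms unfolding skew_hermitian_mat_def char_matrix_def by auto

lemma skew_hermitian_eigenvalue_imaginary:
  assumes A: "skew_hermitian_mat n A" and "eigenvalue A a"
  shows "cnj a = - a"
proof -
  have An: "A \<in> carrier_mat n n" using A unfolding skew_hermitian_mat_def by simp
  obtain v where v: "v \<in> carrier_vec n" "v \<noteq> 0\<^sub>v n" and Av: "A *\<^sub>v v = a \<cdot>\<^sub>v v"
    using assms(2) An unfolding eigenvalue_def eigenvector_def by auto
  have "a * (v \<bullet>c v) = (A *\<^sub>v v) \<bullet>c v"
    using v by (simp add: Av)
  also have "\<dots> = - (v \<bullet>c (A *\<^sub>v v))" by (rule skew_hermitian_cscalar_prod[OF A v(1) v(1)])
  also have "\<dots> = - cnj a * (v \<bullet>c v)"
    using v by (simp add: Av conjugate_smult_vec)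
  finally have "(a + cnj a) * (v \<bullet>c v) = 0" by (simp add: algebra_simps)
  moreover have "v \<bullet>c v \<noteq> 0" using v by simp
  ultimately have "a + cnj a = 0" by simp
  then show ?thesis by (simp add: add_eq_0_iff)
qed

lemma skew_hermitian_kernel_square:
  assumes M: "skew_hermitian_mat n M" and v: "v \<in> carrier_vec n"
    and MMv: "M *\<^sub>v (M *\<^sub>v v) = 0\<^sub>v n"
  shows "M *\<^sub>v v = 0\<^sub>v n"
proof -
  have Mn: "M \<in> carrier_mat n n" using M unfolding skew_hermitian_mat_def by simp
  then have Mv: "M *\<^sub>v v \<in> carrier_vec n" using v by simp
  have "(M *\<^sub>v v) \<bullet>c (M *\<^sub>v v) = - (v \<bullet>c (M *\<^sub>v (M *\<^sub>v v)))"
    by (rule skew_hermitian_cscalar_prod[OF M v Mv])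
  also have "\<dots> = 0" using v by (simp add: MMv)
  finally show ?thesis using Mv by simp
qed

lemma skew_hermitian_kernel_power:
  assumes M: "skew_hermitian_mat n M" and v: "v \<in> carrier_vec n"
    and "k \<ge> 1" and "(M ^\<^sub>m k) *\<^sub>v v = 0\<^sub>v n"
  shows "M *\<^sub>v v = 0\<^sub>v n"
  using assms(3-) v
proof (induction k arbitrary: v rule: dec_induct)
  case base
  then show ?case using M unfolding skew_hermitian_mat_def by simp
next
  case (step k)
  have Mn: "M \<in> carrier_mat n n" using M unfolding skew_hermitian_mat_def by simp
  have "(M ^\<^sub>m k) *\<^sub>v (M *\<^sub>v v) = 0\<^sub>v n"
    using Mn step.prems by (simp add: assoc_mult_mat_vec[of _ n n _ n])
  then have "M *\<^sub>v (M *\<^sub>v v) = 0\<^sub>v n"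
    using Mn step.prems by (intro step.IH) auto
  then show ?case by (rule skew_hermitian_kernel_square[OF M step.prems(2)])
qed

lemma dim_gen_eigenspace_order_char_poly:
  fixes A :: "complex mat" and a :: complex
  assumes A: "A \<in> carrier_mat n n"
  defines "m \<equiv> order a (char_poly A)"
  shows "dim_gen_eigenspace A a m = m"
proof -
  obtain as where "char_poly A = (\<Prod>a\<leftarrow>as. [:- a, 1:])"
    using char_poly_factorized[OF A] by auto
  then obtain n_as where jnf: "jordan_nf A n_as" using jordan_nf_exists[OF A] by auto
  define sizes where "sizes = map fst (filter (\<lambda>(k, e). e = a) n_as)"
  have m: "m = sum_list sizes"
    unfolding m_def sizes_def jordan_nf_order[OF jnf] by (simp add: case_prod_unfold)
  have "dim_gen_eigenspace A a m = (\<Sum>k\<leftarrow>sizes. min m k)"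
    unfolding dim_gen_eigenspace[OF jnf] sizes_def ..
  also have "map (min m) sizes = sizes"
    unfolding m by (intro map_idI) (simp add: member_le_sum_list)
  finally show ?thesis by (simp add: m)
qed

lemma eigenvalue_order_char_poly_pos:
  fixes A :: "'a :: field mat"
  assumes A: "A \<in> carrier_mat n n" and "eigenvalue A a"
  shows "order a (char_poly A) \<noteq> 0"
proof -
  have "char_poly A \<noteq> 0" using degree_monic_char_poly[OF A] by auto
  then show ?thesis using assms eigenvalue_root_char_poly[OF A] order_root by blast
qed

lemma kernel_dim_le_one:
  fixes M :: "'a :: field mat"
  assumes M: "M \<in> carrier_mat n n" and c: "c \<in> carrier_vec n"
    and orth: "\<And>v. v \<in> mat_kernel M \<Longrightarrow> c \<bullet> v = 0 \<Longrightarrow> v = 0\<^sub>v n"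
  shows "kernel_dim M \<le> 1"
proof -
  interpret K: kernel n n M by (unfold_locales) (rule M)
  obtain B where fin: "finite B" and basis: "K.basis B" using kernel_basis_exists[OF M] by blast
  have indpt: "K.lin_indpt B" and B: "B \<subseteq> mat_kernel M"
    using basis unfolding K.Ker.basis_def by auto
  have "card B \<le> 1"
  proof (rule ccontr)
    assume "\<not> card B \<le> 1"
    then obtain u w where u: "u \<in> B" and w: "w \<in> B" and uw: "u \<noteq> w"
      using card_le_Suc0_iff_eq[OF fin] by (auto simp: One_nat_def)
    have uK: "u \<in> mat_kernel M" and wK: "w \<in> mat_kernel M" using u w B by auto
    have uc: "u \<in> carrier_vec n" and wc: "w \<in> carrier_vec n"
      using uK wK mat_kernelD[OF M] by auto
    have "u \<noteq> 0\<^sub>v n" using K.Ker.vs_zero_lin_dep[OF B indpt] u by auto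
    then have cu: "c \<bullet> u \<noteq> 0" using orth[OF uK] by auto
    define a where "a = (\<lambda>z. if z = u then c \<bullet> w else - (c \<bullet> u))"
    define z where "z = (c \<bullet> w) \<cdot>\<^sub>v u + (- (c \<bullet> u)) \<cdot>\<^sub>v w"
    have lincomb: "K.lincomb a {u, w} = z"
    proof -
      have "K.lincomb a ({w} \<union> {u}) = a u \<cdot>\<^sub>v u + K.lincomb a ({} \<union> {w})"
        using uK wK uw by (subst K.Ker.lincomb_insert) auto
      also have "K.lincomb a ({} \<union> {w}) = a w \<cdot>\<^sub>v w + 0\<^sub>v n"
        using wK by (subst K.Ker.lincomb_insert) (auto simp: K.Ker.lincomb_def)
      finally show ?thesis unfolding z_def a_def using uw wc by auto
    qed
    have "z \<in> mat_kernel M" unfolding lincomb[symmetric] using uK wK by auto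
    moreover have "c \<bullet> z = 0"
      unfolding z_def using c uc wc
      by (simp add: scalar_prod_add_distrib scalar_prod_smult_distrib mult.commute)
    ultimately have "z = 0\<^sub>v n" by (rule orth)
    then have "K.lin_dep B"
      using u w uw cu lincomb by (intro K.Ker.lin_dep_crit[of "{u, w}" _ a w]) (auto simp: a_def)
    with indpt show False by simp
  qed
  then show ?thesis using K.Ker.dim_basis[OF fin basis] by simp
qed

lemma skew_hermitian_kernel_orthogonal_eq_zero:
  fixes x :: "nat \<Rightarrow> complex" and c :: "nat \<Rightarrow> real"
  assumes M: "skew_hermitian_mat n M"
    and commutator: "\<And>i j. i < n \<Longrightarrow> j < n \<Longrightarrow> i \<noteq> j \<Longrightarrow>
      (x i - x j) * M $$ (i, j) = of_real (c i * c j)"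
    and c: "\<And>k. k < n \<Longrightarrow> c k \<noteq> 0"
    and v: "v \<in> carrier_vec n" and Mv: "M *\<^sub>v v = 0\<^sub>v n"
    and cv: "vec n (\<lambda>k. of_real (c k)) \<bullet> v = 0"
  shows "v = 0\<^sub>v n"
proof -
  have Mn: "M \<in> carrier_mat n n" using M unfolding skew_hermitian_mat_def by simp
  define Dv where "Dv = vec n (\<lambda>k. x k * v $ k)"
  define w where "w = vec n (\<lambda>k. of_real (c k) * v $ k)"
  have MDv: "M *\<^sub>v Dv = vec n (\<lambda>i. of_real (c i) * w $ i)"
  proof (rule eq_vecI)
    fix i assume "i < dim_vec (vec n (\<lambda>i. of_real (c i) * w $ i))"
    then have i: "i < n" by simp
    have row: "(\<Sum>j = 0..<n. M $$ (i, j) * v $ j) = 0"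
      using Mv i Mn v by (auto simp: scalar_prod_def dest: arg_cong[where f = "\<lambda>u. u $ i"])
    have other: "(\<Sum>j \<in> {0..<n} - {i}. of_real (c j) * v $ j) = - (of_real (c i) * v $ i)"
      using cv v i by (simp add: scalar_prod_def sum.remove[of "{0..<n}" i] add_eq_0_iff)
    have "(M *\<^sub>v Dv) $ i = (\<Sum>j = 0..<n. M $$ (i, j) * (x j * v $ j))"
      using Mn i by (simp add: scalar_prod_def Dv_def)
    also have "\<dots> = (\<Sum>j = 0..<n. (x j - x i) * M $$ (i, j) * v $ j)"
      using row by (simp add: algebra_simps sum_subtractf sum_distrib_left[symmetric])
    also have "\<dots> = (\<Sum>j \<in> {0..<n} - {i}. (x j - x i) * M $$ (i, j) * v $ j)"
      using i by (simp add: sum.remove[of "{0..<n}" i])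
    also have "\<dots> = (\<Sum>j \<in> {0..<n} - {i}. - (of_real (c i) * (of_real (c j) * v $ j)))"
    proof (rule sum.cong)
      fix j assume "j \<in> {0..<n} - {i}"
      then have "(x j - x i) * M $$ (i, j) = - of_real (c i * c j)"
        using i commutator[of i j] by (simp add: algebra_simps)
      then show "(x j - x i) * M $$ (i, j) * v $ j = - (of_real (c i) * (of_real (c j) * v $ j))"
        by simp
    qed simp
    also have "\<dots> = of_real (c i) * w $ i"
      using i by (simp add: sum_negf sum_distrib_left[symmetric] other w_def)
    finally show "(M *\<^sub>v Dv) $ i = vec n (\<lambda>i. of_real (c i) * w $ i) $ i" using i by simp
  qed (use Mn in \<open>simp add: Dv_def\<close>)
  have "w \<bullet>c w = (M *\<^sub>v Dv) \<bullet>c v"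
    unfolding MDv using v by (simp add: scalar_prod_def w_def algebra_simps)
  also have "\<dots> = - (Dv \<bullet>c (M *\<^sub>v v))"
    by (rule skew_hermitian_cscalar_prod[OF M]) (use v in \<open>auto simp: Dv_def\<close>)
  also have "\<dots> = 0" using v by (simp add: Mv Dv_def)
  finally have w0: "w = 0\<^sub>v n" by (simp add: w_def)
  show ?thesis
  proof (rule eq_vecI)
    fix i assume "i < dim_vec (0\<^sub>v n :: complex vec)"
    then have i: "i < n" by simp
    then have "of_real (c i) * v $ i = 0"
      using arg_cong[OF w0, of "\<lambda>u. u $ i"] by (simp add: w_def)
    then show "v $ i = 0\<^sub>v n $ i" using c[OF i] i by simp
  qed (use v in simp)
qed

lemma skew_hermitian_eigenvalue_simple:
  fixes x :: "nat \<Rightarrow> complex" and c :: "nat \<Rightarrow> real"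
  assumes A: "skew_hermitian_mat n A"
    and commutator: "\<And>i j. i < n \<Longrightarrow> j < n \<Longrightarrow> i \<noteq> j \<Longrightarrow>
      (x i - x j) * A $$ (i, j) = of_real (c i * c j)"
    and c: "\<And>k. k < n \<Longrightarrow> c k \<noteq> 0"
    and ev: "eigenvalue A a"
  shows "order a (char_poly A) = 1"
proof -
  define M where "M = char_matrix A a"
  define m where "m = order a (char_poly A)"
  have A_carrier: "A \<in> carrier_mat n n" using A unfolding skew_hermitian_mat_def by simp
  have M: "skew_hermitian_mat n M"
    unfolding M_def using A skew_hermitian_eigenvalue_imaginary[OF A ev]
    by (rule skew_hermitian_char_matrix)
  then have M_carrier: "M \<in> carrier_mat n n" unfolding skew_hermitian_mat_def by simp
  have "m \<noteq> 0" unfolding m_def by (rule eigenvalue_order_char_poly_pos[OF A_carrier ev])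
  have M_commutator: "(x i - x j) * M $$ (i, j) = of_real (c i * c j)"
    if "i < n" "j < n" "i \<noteq> j" for i j
    using commutator[OF that] that A_carrier by (simp add: M_def char_matrix_def)
  have "m = kernel_dim (M ^\<^sub>m m)"
    using dim_gen_eigenspace_order_char_poly[OF A_carrier, of a]
    unfolding dim_gen_eigenspace_def M_def m_def by simp
  also have "\<dots> \<le> 1"
  proof (rule kernel_dim_le_one[of _ n "vec n (\<lambda>k. of_real (c k))"])
    fix v assume "v \<in> mat_kernel (M ^\<^sub>m m)" and cv: "vec n (\<lambda>k. of_real (c k)) \<bullet> v = 0"
    then have v: "v \<in> carrier_vec n" and "(M ^\<^sub>m m) *\<^sub>v v = 0\<^sub>v n"
      using mat_kernelD[of "M ^\<^sub>m m" n n] M_carrier by auto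
    then have "M *\<^sub>v v = 0\<^sub>v n"
      using skew_hermitian_kernel_power[OF M v, of m] \<open>m \<noteq> 0\<close> by simp
    then show "v = 0\<^sub>v n"
      using skew_hermitian_kernel_orthogonal_eq_zero[OF M M_commutator c v _ cv] by blast
  qed (use M_carrier in auto)
  finally show ?thesis using \<open>m \<noteq> 0\<close> unfolding m_def by simp
qed

lemma Bmat_skew_hermitian: "skew_hermitian_mat R (map_mat complex_of_real (Bmat R x c))"
  unfolding skew_hermitian_mat_def Bmat_def
  by (auto simp: mult.commute) (metis minus_diff_eq minus_divide_right)

lemma Bmat_commutator:
  assumes "inj_on x {..<R}" and "i < R" and "j < R" and "i \<noteq> j"
  shows "(of_real (x i) - of_real (x j)) * map_mat complex_of_real (Bmat R x c) $$ (i, j)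
    = of_real (c i * c j)"
proof -
  have "x i \<noteq> x j" using assms inj_onD[of x "{..<R}" i j] by auto
  then have "(x i - x j) * Bmat R x c $$ (i, j) = c i * c j"
    using assms(2-) unfolding Bmat_def by simp
  then show ?thesis
    using assms(2,3) unfolding Bmat_def by (simp flip: of_real_diff of_real_mult)
qed

theorem corollary1:
  fixes R :: nat and x c :: "nat \<Rightarrow> real"
  assumes "R \<ge> 1"
    and "inj_on x {..<R}"
    and "\<forall>k<R. c k \<noteq> 0"
  shows "\<forall>a :: complex. eigenvalue (map_mat complex_of_real (Bmat R x c)) a
           \<longrightarrow> order a (char_poly (map_mat complex_of_real (Bmat R x c))) = 1"
  using skew_hermitian_eigenvalue_simple[OF Bmat_skew_hermitian Bmat_commutator[OF assms(2)]]
    assms(3) by blast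

end
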